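(* For all $i,j,k$, $v_k(e_{i\bar j})=v_i(e_{k\bar j})$.
   Context: $g\ge2$, $n=3g-3$. Over a local chart of (a manifold cover of) $\mathcal M_g$ with holomorphic coordinates $s_1,\dots,s_n$, $\partial_i=\partial/\partial s_i$, let $\mathfrak X$ be the universal family with local fiber coordinate $z$. Each fiber carries the hyperbolic metric $\frac{\sqrt{-1}}2\lambda\,dz\wedge d\bar z$ normalized by $\partial_z\partial_{\bar z}\log\lambda=\lambda$. Put $a_i=-\lambda^{-1}\partial_i\partial_{\bar z}\log\lambda$, $v_i=\partial_i+a_i\partial_z$ (the harmonic horizontal lift of $\partial_i$, a vector field on $\mathfrak X$), $g_{i\bar j}=\partial_i\partial_{\bar j}\log\lambda$ and $e_{i\bar j}=g_{i\bar j}-\lambda a_i\overline{a_j}$ (a global function on $\mathfrak X$). *)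

theory Defs
  imports "HOL-Analysis.Analysis"
begin

type_synonym 'n pt = "(complex^'n) \<times> complex"

definition dR :: "('n::finite pt \<Rightarrow> complex) \<Rightarrow> 'n pt \<Rightarrow> 'n pt \<Rightarrow> complex" where
  "dR f w p = vector_derivative (\<lambda>t::real. f (p + t *\<^sub>R w)) (at 0)"

text \<open>Wirtinger derivatives in the base coordinates s_i and the fibre coordinate z.\<close>
definition dS :: "'n::finite \<Rightarrow> ('n pt \<Rightarrow> complex) \<Rightarrow> 'n pt \<Rightarrow> complex" where
  "dS i f p = (dR f (axis i 1, 0) p - \<i> * dR f (axis i \<i>, 0) p) / 2"
definition dSb :: "'n::finite \<Rightarrow> ('n pt \<Rightarrow> complex) \<Rightarrow> 'n pt \<Rightarrow> complex" where
  "dSb i f p = (dR f (axis i 1, 0) p + \<i> * dR f (axis i \<i>, 0) p) / 2"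
definition dZ :: "('n::finite pt \<Rightarrow> complex) \<Rightarrow> 'n pt \<Rightarrow> complex" where
  "dZ f p = (dR f (0, 1) p - \<i> * dR f (0, \<i>) p) / 2"
definition dZb :: "('n::finite pt \<Rightarrow> complex) \<Rightarrow> 'n pt \<Rightarrow> complex" where
  "dZb f p = (dR f (0, 1) p + \<i> * dR f (0, \<i>) p) / 2"

fun iter_dR :: "'n::finite pt list \<Rightarrow> ('n pt \<Rightarrow> complex) \<Rightarrow> 'n pt \<Rightarrow> complex" where
  "iter_dR [] f = f"
| "iter_dR (w # ws) f = dR (iter_dR ws f) w"

definition smooth_on :: "'n::finite pt set \<Rightarrow> ('n pt \<Rightarrow> complex) \<Rightarrow> bool" where
  "smooth_on U f \<longleftrightarrow> (\<forall>ws. iter_dR ws f differentiable_on U)"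

definition logl :: "('n::finite pt \<Rightarrow> real) \<Rightarrow> 'n pt \<Rightarrow> complex" where
  "logl lam p = complex_of_real (ln (lam p))"

definition acoef :: "('n::finite pt \<Rightarrow> real) \<Rightarrow> 'n \<Rightarrow> 'n pt \<Rightarrow> complex" where
  "acoef lam i p = - dS i (dZb (logl lam)) p / complex_of_real (lam p)"

definition vlift :: "('n::finite pt \<Rightarrow> real) \<Rightarrow> 'n \<Rightarrow> ('n pt \<Rightarrow> complex) \<Rightarrow> 'n pt \<Rightarrow> complex" where
  "vlift lam i f p = dS i f p + acoef lam i p * dZ f p"

definition gcoef :: "('n::finite pt \<Rightarrow> real) \<Rightarrow> 'n \<Rightarrow> 'n \<Rightarrow> 'n pt \<Rightarrow> complex" where
  "gcoef lam i j p = dS i (dSb j (logl lam)) p"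

definition ecoef :: "('n::finite pt \<Rightarrow> real) \<Rightarrow> 'n \<Rightarrow> 'n \<Rightarrow> 'n pt \<Rightarrow> complex" where
  "ecoef lam i j p = gcoef lam i j p - complex_of_real (lam p) * acoef lam i p * cnj (acoef lam j p)"

end

(*
  Write phi = log lam, A_i = d_i d_zbar phi and B_j = d_jbar d_z phi.  Since phi is real,
  conj a_j = -B_j / lam, hence e_ij = d_i d_jbar phi - A_i B_j / lam.  Applying
  v_k = d_k - (A_k / lam) d_z and using the curvature equation d_z d_zbar phi = lam in the
  form d_z A_i = lam d_i phi, together with d_z d_i d_jbar phi = d_i B_j, turns v_k(e_ij)
  into an expression that is symmetric in i and k except for the third derivatives
  d_k d_i d_jbar phi and d_k d_i d_zbar phi.  These are symmetric as well, because mixed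
  partial derivatives of smooth functions commute, which follows from the mean value
  inequality applied to second differences.
*)
theory Submission
  imports Defs
begin

(* Points and directions are pairs; splitting quantifiers over them only gets in the way. *)
declare split_paired_All [simp del] split_paired_Ex [simp del]

section \<open>Symmetry of second derivatives\<close>

lemma has_derivative_along_line:
  assumes "(f has_derivative D) (at (a + t *\<^sub>R u))"
  shows "((\<lambda>t. f (a + t *\<^sub>R u)) has_derivative (\<lambda>h. h *\<^sub>R D u)) (at t within S)"
proof -
  have "((\<lambda>t::real. a + t *\<^sub>R u) has_derivative (\<lambda>h. h *\<^sub>R u)) (at t within S)"
    by (auto intro!: derivative_eq_intros)
  from has_derivative_compose[OF this assms]
  have "((\<lambda>t. f (a + t *\<^sub>R u)) has_derivative (\<lambda>h. D (h *\<^sub>R u))) (at t within S)" .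
  moreover have "(\<lambda>h. D (h *\<^sub>R u)) = (\<lambda>h. h *\<^sub>R D u)"
    using assms has_derivative_linear linear_scale by blast
  ultimately show ?thesis by simp
qed

lemma derivative_increment_bound:
  fixes Df :: "'a::real_normed_vector \<Rightarrow> 'a \<Rightarrow> 'b::real_normed_vector"
  assumes lin: "linear Hu"
    and approx: "\<And>y. y \<in> B \<Longrightarrow> norm (Df y u - Df p u - Hu (y - p)) \<le> e * norm (y - p)"
    and "p + t *\<^sub>R u \<in> B" "p + s *\<^sub>R w + t *\<^sub>R u \<in> B" "0 \<le> t" "t \<le> s" "0 \<le> e"
  shows "norm (Df (p + s *\<^sub>R w + t *\<^sub>R u) u - Df (p + t *\<^sub>R u) u - s *\<^sub>R Hu w)
           \<le> e * s * (2 * norm u + norm w)"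
proof -
  let ?y1 = "p + s *\<^sub>R w + t *\<^sub>R u" and ?y2 = "p + t *\<^sub>R u"
  have "Hu (?y1 - p) - Hu (?y2 - p) = s *\<^sub>R Hu w"
    using lin by (simp add: linear_add linear_scale)
  then have "Df ?y1 u - Df ?y2 u - s *\<^sub>R Hu w
               = (Df ?y1 u - Df p u - Hu (?y1 - p)) - (Df ?y2 u - Df p u - Hu (?y2 - p))"
    by (simp add: algebra_simps)
  then have "norm (Df ?y1 u - Df ?y2 u - s *\<^sub>R Hu w)
               \<le> norm (Df ?y1 u - Df p u - Hu (?y1 - p)) + norm (Df ?y2 u - Df p u - Hu (?y2 - p))"
    by (simp only: norm_triangle_ineq4)
  also have "\<dots> \<le> e * norm (?y1 - p) + e * norm (?y2 - p)"
    using assms(3,4) by (intro add_mono approx)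
  also have "\<dots> \<le> e * (s * norm w + t * norm u) + e * (t * norm u)"
  proof -
    have "norm (?y1 - p) \<le> s * norm w + t * norm u"
      using assms(5,6) norm_triangle_ineq[of "s *\<^sub>R w" "t *\<^sub>R u"] by (simp add: add.assoc)
    then show ?thesis using assms(5,7) by (simp add: mult_left_mono)
  qed
  also have "\<dots> \<le> e * s * (2 * norm u + norm w)"
  proof -
    have "t * norm u \<le> s * norm u" using assms(6) by (simp add: mult_right_mono)
    then have "s * norm w + t * norm u + t * norm u \<le> s * (2 * norm u + norm w)"
      by (simp add: algebra_simps)
    from mult_left_mono[OF this \<open>0 \<le> e\<close>] show ?thesis by (simp add: algebra_simps)
  qed
  finally show ?thesis .
qed

lemma second_difference_bound:
  fixes f :: "'a::real_normed_vector \<Rightarrow> 'b::real_normed_vector"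
  assumes df: "\<And>y. y \<in> B \<Longrightarrow> (f has_derivative Df y) (at y)"
    and lin: "linear Hu"
    and approx: "\<And>y. y \<in> B \<Longrightarrow> norm (Df y u - Df p u - Hu (y - p)) \<le> e * norm (y - p)"
    and segments: "\<And>t. 0 \<le> t \<Longrightarrow> t \<le> s \<Longrightarrow> p + t *\<^sub>R u \<in> B \<and> p + s *\<^sub>R w + t *\<^sub>R u \<in> B"
    and "0 \<le> s" "0 \<le> e"
  shows "norm (f (p + s *\<^sub>R u + s *\<^sub>R w) - f (p + s *\<^sub>R u) - f (p + s *\<^sub>R w) + f p
                - (s * s) *\<^sub>R Hu w) \<le> e * s * s * (2 * norm u + norm w)"
proof -
  define c where "c t = Df (p + s *\<^sub>R w + t *\<^sub>R u) u - Df (p + t *\<^sub>R u) u - s *\<^sub>R Hu w" for t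
  define G where "G t = f (p + s *\<^sub>R w + t *\<^sub>R u) - f (p + t *\<^sub>R u) - (t * s) *\<^sub>R Hu w" for t
  have "(G has_derivative (\<lambda>h. h *\<^sub>R c t)) (at t within {0..s})" if "t \<in> {0..s}" for t
  proof -
    have "((\<lambda>t. (t * s) *\<^sub>R Hu w) has_derivative (\<lambda>h. h *\<^sub>R (s *\<^sub>R Hu w))) (at t within {0..s})"
      by (auto intro!: derivative_eq_intros)
    with has_derivative_along_line[OF df] segments that
    have "(G has_derivative (\<lambda>h. h *\<^sub>R Df (p + s *\<^sub>R w + t *\<^sub>R u) u - h *\<^sub>R Df (p + t *\<^sub>R u) u
                                  - h *\<^sub>R (s *\<^sub>R Hu w))) (at t within {0..s})"
      unfolding G_def by (intro has_derivative_diff) auto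
    then show ?thesis unfolding c_def by (simp add: algebra_simps)
  qed
  moreover have "onorm (\<lambda>h. h *\<^sub>R c t) \<le> e * s * (2 * norm u + norm w)" if "t \<in> {0..s}" for t
    using derivative_increment_bound[where Df = Df and B = B, OF lin approx] segments that \<open>0 \<le> e\<close>
    by (simp add: c_def onorm_scaleR_left onorm_id)
  ultimately have "norm (G s - G 0) \<le> e * s * (2 * norm u + norm w) * norm (s - 0)"
    using \<open>0 \<le> s\<close> by (intro differentiable_bound[OF convex_real_interval(5)]) auto
  moreover have "G s - G 0 = f (p + s *\<^sub>R u + s *\<^sub>R w) - f (p + s *\<^sub>R u) - f (p + s *\<^sub>R w) + f p
                               - (s * s) *\<^sub>R Hu w"
    unfolding G_def by (simp add: algebra_simps)
  ultimately show ?thesis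
    using \<open>0 \<le> s\<close> by (simp add: mult_ac)
qed

lemma second_difference_points_in_ball:
  assumes "0 \<le> t" "t \<le> s" "s * (norm u + norm w) < \<rho>"
  shows "p + t *\<^sub>R u \<in> ball p \<rho>" "p + s *\<^sub>R w + t *\<^sub>R u \<in> ball p \<rho>"
proof -
  have "norm (t *\<^sub>R u) \<le> s * norm u"
    using assms(1,2) by (simp add: mult_right_mono)
  moreover have "norm (s *\<^sub>R w + t *\<^sub>R u) \<le> s * norm w + norm (t *\<^sub>R u)"
    using norm_triangle_ineq[of "s *\<^sub>R w" "t *\<^sub>R u"] assms(1,2) by simp
  moreover have "0 \<le> s * norm u" "0 \<le> s * norm w"
    using assms(1,2) by simp_all
  ultimately have "norm (t *\<^sub>R u) < \<rho>" "norm (s *\<^sub>R w + t *\<^sub>R u) < \<rho>"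
    using assms(3) by (simp_all add: algebra_simps)
  moreover have ball: "p + x \<in> ball p \<rho> \<longleftrightarrow> norm x < \<rho>" for x
    by (simp add: dist_norm)
  ultimately show "p + t *\<^sub>R u \<in> ball p \<rho>" "p + s *\<^sub>R w + t *\<^sub>R u \<in> ball p \<rho>"
    by (simp_all only: add.assoc ball)
qed

lemma second_difference_small:
  fixes f :: "'a::real_normed_vector \<Rightarrow> 'b::real_normed_vector"
  assumes "open U" "p \<in> U"
    and df: "\<And>y. y \<in> U \<Longrightarrow> (f has_derivative Df y) (at y)"
    and hu: "((\<lambda>y. Df y u) has_derivative Hu) (at p)"
    and "e > 0"
  shows "\<forall>\<^sub>F s in at_right 0.
           norm (f (p + s *\<^sub>R u + s *\<^sub>R w) - f (p + s *\<^sub>R u) - f (p + s *\<^sub>R w) + f p - (s * s) *\<^sub>R Hu w)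
             \<le> e * (s * s)"
proof -
  define K where "K = 2 * norm u + norm w + 1"
  have "K > 0" by (simp add: K_def add_nonneg_pos)
  obtain d where "d > 0"
    and approx: "\<And>y. norm (y - p) < d \<Longrightarrow> norm (Df y u - Df p u - Hu (y - p)) \<le> e / K * norm (y - p)"
    using hu \<open>e > 0\<close> \<open>K > 0\<close> unfolding has_derivative_at_alt by (meson divide_pos_pos)
  obtain r where "r > 0" "ball p r \<subseteq> U"
    using assms(1,2) open_contains_ball by blast
  define \<rho> where "\<rho> = min d r"
  have "((\<lambda>s. s * (norm u + norm w)) \<longlongrightarrow> 0) (at_right 0)"
    by (auto intro!: tendsto_eq_intros)
  then have "\<forall>\<^sub>F s in at_right 0. s * (norm u + norm w) < \<rho>"
    using \<open>d > 0\<close> \<open>r > 0\<close> by (intro order_tendstoD(2)) (auto simp: \<rho>_def)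
  with eventually_at_right_less[of 0]
  have "\<forall>\<^sub>F s in at_right 0. 0 < s \<and> s * (norm u + norm w) < \<rho>"
    by (rule eventually_conj)
  then show ?thesis
  proof (rule eventually_mono)
    fix s :: real assume s: "0 < s \<and> s * (norm u + norm w) < \<rho>"
    have "norm (f (p + s *\<^sub>R u + s *\<^sub>R w) - f (p + s *\<^sub>R u) - f (p + s *\<^sub>R w) + f p - (s * s) *\<^sub>R Hu w)
            \<le> e / K * s * s * (2 * norm u + norm w)"
    proof (rule second_difference_bound[where B = "ball p \<rho>"])
      show "(f has_derivative Df y) (at y)" if "y \<in> ball p \<rho>" for y
        using that \<open>ball p r \<subseteq> U\<close> by (intro df) (auto simp: \<rho>_def)
      show "norm (Df y u - Df p u - Hu (y - p)) \<le> e / K * norm (y - p)" if "y \<in> ball p \<rho>" for y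
        using that by (intro approx) (auto simp: \<rho>_def dist_norm norm_minus_commute)
    qed (use hu has_derivative_linear s second_difference_points_in_ball \<open>e > 0\<close> \<open>K > 0\<close> in auto)
    also have "\<dots> \<le> e / K * s * s * K"
      using s \<open>e > 0\<close> \<open>K > 0\<close> by (intro mult_left_mono) (auto simp: K_def)
    also have "\<dots> = e * (s * s)"
      using \<open>K > 0\<close> by simp
    finally show "norm (f (p + s *\<^sub>R u + s *\<^sub>R w) - f (p + s *\<^sub>R u) - f (p + s *\<^sub>R w) + f p
                          - (s * s) *\<^sub>R Hu w) \<le> e * (s * s)" .
  qed
qed

lemma second_difference_tendsto:
  fixes f :: "'a::real_normed_vector \<Rightarrow> 'b::real_normed_vector"
  assumes "open U" "p \<in> U"
    and df: "\<And>y. y \<in> U \<Longrightarrow> (f has_derivative Df y) (at y)"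
    and hu: "((\<lambda>y. Df y u) has_derivative Hu) (at p)"
  shows "((\<lambda>s. (f (p + s *\<^sub>R u + s *\<^sub>R w) - f (p + s *\<^sub>R u) - f (p + s *\<^sub>R w) + f p) /\<^sub>R (s * s))
           \<longlongrightarrow> Hu w) (at_right 0)"
proof -
  define D where "D s = f (p + s *\<^sub>R u + s *\<^sub>R w) - f (p + s *\<^sub>R u) - f (p + s *\<^sub>R w) + f p" for s
  have "((\<lambda>s. D s /\<^sub>R (s * s)) \<longlongrightarrow> Hu w) (at_right 0)"
  proof (rule tendstoI)
    fix \<epsilon> :: real assume "\<epsilon> > 0"
    have "\<forall>\<^sub>F s in at_right 0. norm (D s - (s * s) *\<^sub>R Hu w) \<le> \<epsilon> / 2 * (s * s)"
      unfolding D_def using second_difference_small[OF assms, of "\<epsilon> / 2" w] \<open>\<epsilon> > 0\<close> by simp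
    with eventually_at_right_less[of 0]
    show "\<forall>\<^sub>F s in at_right 0. dist (D s /\<^sub>R (s * s)) (Hu w) < \<epsilon>"
    proof eventually_elim
      case (elim s)
      have "D s /\<^sub>R (s * s) - Hu w = (D s - (s * s) *\<^sub>R Hu w) /\<^sub>R (s * s)"
        using elim by (simp add: scaleR_diff_right field_simps)
      then have "dist (D s /\<^sub>R (s * s)) (Hu w) = norm (D s - (s * s) *\<^sub>R Hu w) / (s * s)"
        by (simp add: dist_norm divide_inverse_commute)
      also have "\<dots> \<le> \<epsilon> / 2"
        using elim by (simp add: pos_divide_le_eq)
      finally show ?case
        using \<open>\<epsilon> > 0\<close> by linarith
    qed
  qed
  then show ?thesis unfolding D_def .
qed

lemma second_derivative_symmetric:
  fixes f :: "'a::real_normed_vector \<Rightarrow> 'b::real_normed_vector"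
  assumes "open U" "p \<in> U"
    and df: "\<And>y. y \<in> U \<Longrightarrow> (f has_derivative Df y) (at y)"
    and hu: "((\<lambda>y. Df y u) has_derivative Hu) (at p)"
    and hw: "((\<lambda>y. Df y w) has_derivative Hw) (at p)"
  shows "Hu w = Hw u"
proof -
  have swap: "(\<lambda>s. (f (p + s *\<^sub>R w + s *\<^sub>R u) - f (p + s *\<^sub>R w) - f (p + s *\<^sub>R u) + f p) /\<^sub>R (s * s)) =
               (\<lambda>s. (f (p + s *\<^sub>R u + s *\<^sub>R w) - f (p + s *\<^sub>R u) - f (p + s *\<^sub>R w) + f p) /\<^sub>R (s * s))"
    by (simp add: algebra_simps)
  have "((\<lambda>s. (f (p + s *\<^sub>R u + s *\<^sub>R w) - f (p + s *\<^sub>R u) - f (p + s *\<^sub>R w) + f p) /\<^sub>R (s * s))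
               \<longlongrightarrow> Hw u) (at_right 0)"
    using second_difference_tendsto[OF assms(1,2) df hw, of u] unfolding swap .
  with second_difference_tendsto[OF assms(1,2) df hu, of w]
  show ?thesis by (rule tendsto_unique[OF trivial_limit_at_right_real])
qed

lemma dR_has_derivative:
  assumes "(f has_derivative f') (at p)"
  shows "dR f w p = f' w"
proof -
  have "((\<lambda>t. f (p + t *\<^sub>R w)) has_derivative (\<lambda>h. h *\<^sub>R f' w)) (at 0)"
    using has_derivative_along_line[of f f' p 0 w UNIV] assms by simp
  then show ?thesis
    unfolding dR_def has_vector_derivative_def[symmetric] by (rule vector_derivative_at)
qed

lemma dR_cong_open:
  assumes "open V" "p \<in> V" "\<And>q. q \<in> V \<Longrightarrow> f q = g q"
  shows "dR f w p = dR g w p"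
proof -
  let ?T = "(\<lambda>t::real. p + t *\<^sub>R w) -` V"
  have "open ?T"
    by (rule continuous_open_vimage[OF assms(1)]) (intro continuous_intros)
  moreover have "0 \<in> ?T" using assms(2) by simp
  ultimately have "((\<lambda>t. f (p + t *\<^sub>R w)) has_vector_derivative D) (at 0) \<longleftrightarrow>
                   ((\<lambda>t. g (p + t *\<^sub>R w)) has_vector_derivative D) (at 0)" for D
    using has_vector_derivative_transform_within_open assms(3) by (smt (verit) vimageE)
  then show ?thesis unfolding dR_def vector_derivative_def by simp
qed

lemma dR_add:
  assumes "f differentiable (at p)" "g differentiable (at p)"
  shows "dR (\<lambda>q. f q + g q) w p = dR f w p + dR g w p"
proof -
  obtain Df Dg where "(f has_derivative Df) (at p)" "(g has_derivative Dg) (at p)"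
    using assms unfolding differentiable_def by blast
  note d = this
  show ?thesis
    using dR_has_derivative[OF has_derivative_add[OF d]] dR_has_derivative[OF d(1)] dR_has_derivative[OF d(2)]
    by simp
qed

lemma dR_diff:
  assumes "f differentiable (at p)" "g differentiable (at p)"
  shows "dR (\<lambda>q. f q - g q) w p = dR f w p - dR g w p"
proof -
  obtain Df Dg where "(f has_derivative Df) (at p)" "(g has_derivative Dg) (at p)"
    using assms unfolding differentiable_def by blast
  note d = this
  show ?thesis
    using dR_has_derivative[OF has_derivative_diff[OF d]] dR_has_derivative[OF d(1)] dR_has_derivative[OF d(2)]
    by simp
qed

lemma dR_mult:
  assumes "f differentiable (at p)" "g differentiable (at p)"
  shows "dR (\<lambda>q. f q * g q) w p = f p * dR g w p + dR f w p * g p"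
proof -
  obtain Df Dg where "(f has_derivative Df) (at p)" "(g has_derivative Dg) (at p)"
    using assms unfolding differentiable_def by blast
  note d = this
  show ?thesis
    using dR_has_derivative[OF has_derivative_mult[OF d]] dR_has_derivative[OF d(1)] dR_has_derivative[OF d(2)]
    by simp
qed

lemma dR_inverse:
  assumes "g differentiable (at p)" "g p \<noteq> 0"
  shows "dR (\<lambda>q. inverse (g q)) w p = - (inverse (g p) * dR g w p * inverse (g p))"
proof -
  obtain Dg where "(g has_derivative Dg) (at p)"
    using assms unfolding differentiable_def by blast
  note d = this
  show ?thesis
    using dR_has_derivative[OF Deriv.has_derivative_inverse[OF assms(2) d]] dR_has_derivative[OF d]
    by simp
qed

lemma dR_const: "dR (\<lambda>_. c) w = (\<lambda>_. 0)"
  using dR_has_derivative[of "\<lambda>_. c" "\<lambda>_. 0" _ w] by auto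

lemma all_length_le_Suc_conv:
  fixes P :: "'a list \<Rightarrow> bool"
  shows "(\<forall>xs. length xs \<le> Suc n \<longrightarrow> P xs) \<longleftrightarrow> P [] \<and> (\<forall>x xs. length xs \<le> n \<longrightarrow> P (xs @ [x]))"
proof (intro iffI allI impI)
  fix xs :: "'a list" assume "P [] \<and> (\<forall>x xs. length xs \<le> n \<longrightarrow> P (xs @ [x]))" "length xs \<le> Suc n"
  then show "P xs" by (cases xs rule: rev_exhaust) auto
qed auto

fun differentiable_upto :: "'n::finite pt set \<Rightarrow> nat \<Rightarrow> ('n pt \<Rightarrow> complex) \<Rightarrow> bool" where
  "differentiable_upto U 0 f \<longleftrightarrow> f differentiable_on U"
| "differentiable_upto U (Suc n) f \<longleftrightarrow>
     f differentiable_on U \<and> (\<forall>w. differentiable_upto U n (dR f w))"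

lemma differentiable_upto_iff:
  "differentiable_upto U n f \<longleftrightarrow> (\<forall>ws. length ws \<le> n \<longrightarrow> iter_dR ws f differentiable_on U)"
proof (induction n arbitrary: f)
  case 0
  then show ?case by simp
next
  case (Suc n)
  have snoc: "iter_dR (ws @ [w]) f = iter_dR ws (dR f w)" for ws w
    by (induction ws) auto
  show ?case
    by (subst all_length_le_Suc_conv) (simp add: snoc Suc.IH)
qed

lemma smooth_on_iff_differentiable_upto: "smooth_on U f \<longleftrightarrow> (\<forall>n. differentiable_upto U n f)"
  unfolding smooth_on_def differentiable_upto_iff by (meson order_refl)

lemma differentiable_upto_Suc_D: "differentiable_upto U (Suc n) f \<Longrightarrow> differentiable_upto U n f"
  by (induction n arbitrary: f) auto

lemma differentiable_on_cong:
  assumes "f differentiable_on U" "\<And>q. q \<in> U \<Longrightarrow> f q = g q"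
  shows "g differentiable_on U"
  unfolding differentiable_on_def
proof
  fix x assume "x \<in> U"
  with assms(1) have "f differentiable (at x within U)"
    unfolding differentiable_on_def by blast
  then show "g differentiable (at x within U)"
    by (rule differentiable_transform_within[OF _ zero_less_one \<open>x \<in> U\<close>]) (simp add: assms(2))
qed

lemma differentiable_upto_cong_open:
  assumes "open U" "\<And>q. q \<in> U \<Longrightarrow> f q = g q" "differentiable_upto U n f"
  shows "differentiable_upto U n g"
  using assms(2,3)
proof (induction n arbitrary: f g)
  case 0
  then show ?case using differentiable_on_cong[of f U g] by simp
next
  case (Suc n)
  have "differentiable_upto U n (dR g w)" for w
  proof (rule Suc.IH)
    show "dR f w q = dR g w q" if "q \<in> U" for q
      using dR_cong_open[OF assms(1) that Suc.prems(1)] .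
    show "differentiable_upto U n (dR f w)"
      using Suc.prems(2) by simp
  qed
  then show ?case using Suc.prems differentiable_on_cong[of f U g] by simp
qed

lemma differentiable_upto_SucI:
  assumes "open U" "h differentiable_on U"
    and "\<And>w. differentiable_upto U n (h' w)" "\<And>w q. q \<in> U \<Longrightarrow> h' w q = dR h w q"
  shows "differentiable_upto U (Suc n) h"
proof -
  have "differentiable_upto U n (dR h w)" for w
    by (rule differentiable_upto_cong_open[OF assms(1) _ assms(3)]) (rule assms(4))
  with assms(2) show ?thesis by simp
qed

lemma differentiable_upto_const: "differentiable_upto U n (\<lambda>_. c)"
  by (induction n arbitrary: c) (simp_all add: dR_const)

lemma differentiable_upto_add:
  assumes "open U"
  shows "differentiable_upto U n f \<Longrightarrow> differentiable_upto U n g \<Longrightarrow>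
           differentiable_upto U n (\<lambda>q. f q + g q)"
proof (induction n arbitrary: f g)
  case 0
  then show ?case by simp
next
  case (Suc n)
  show ?case
  proof (rule differentiable_upto_SucI[OF assms, where h' = "\<lambda>w q. dR f w q + dR g w q"])
    show "dR f w q + dR g w q = dR (\<lambda>q. f q + g q) w q" if "q \<in> U" for w q
      using Suc.prems that assms by (simp add: dR_add differentiable_on_eq_differentiable_at)
  qed (use Suc in simp_all)
qed

lemma differentiable_upto_mult:
  assumes "open U"
  shows "differentiable_upto U n f \<Longrightarrow> differentiable_upto U n g \<Longrightarrow>
           differentiable_upto U n (\<lambda>q. f q * g q)"
proof (induction n arbitrary: f g)
  case 0
  then show ?case by simp
next
  case (Suc n)
  have "differentiable_upto U n f" "differentiable_upto U n g"
    using Suc.prems differentiable_upto_Suc_D by blast+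
  show ?case
  proof (rule differentiable_upto_SucI[OF assms, where h' = "\<lambda>w q. f q * dR g w q + dR f w q * g q"])
    show "f q * dR g w q + dR f w q * g q = dR (\<lambda>q. f q * g q) w q" if "q \<in> U" for w q
      using Suc.prems that assms by (simp add: dR_mult differentiable_on_eq_differentiable_at)
    show "differentiable_upto U n (\<lambda>q. f q * dR g w q + dR f w q * g q)" for w
      using Suc \<open>differentiable_upto U n f\<close> \<open>differentiable_upto U n g\<close>
      by (intro differentiable_upto_add[OF assms] Suc.IH) auto
  qed (use Suc in simp)
qed

lemma differentiable_upto_inverse:
  assumes "open U"
  shows "differentiable_upto U n g \<Longrightarrow> \<forall>q\<in>U. g q \<noteq> 0 \<Longrightarrow> differentiable_upto U n (\<lambda>q. inverse (g q))"
proof (induction n arbitrary: g)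
  case 0
  then show ?case by simp
next
  case (Suc n)
  have inv: "differentiable_upto U n (\<lambda>q. inverse (g q))"
    using Suc differentiable_upto_Suc_D by blast
  show ?case
  proof (rule differentiable_upto_SucI[OF assms,
        where h' = "\<lambda>w q. - (inverse (g q) * (dR g w q * inverse (g q)))"])
    show "- (inverse (g q) * (dR g w q * inverse (g q))) = dR (\<lambda>q. inverse (g q)) w q"
      if "q \<in> U" for w q
      using Suc.prems that assms by (simp add: dR_inverse differentiable_on_eq_differentiable_at mult.assoc)
    show "differentiable_upto U n (\<lambda>q. - (inverse (g q) * (dR g w q * inverse (g q))))" for w
    proof -
      have "differentiable_upto U n (dR g w)"
        using Suc.prems(1) by simp
      with inv have "differentiable_upto U n (\<lambda>q. (- 1) * (inverse (g q) * (dR g w q * inverse (g q))))"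
        by (intro differentiable_upto_mult[OF assms] differentiable_upto_const)
      then show ?thesis by simp
    qed
  qed (use Suc in simp)
qed

lemma smooth_on_cong_open:
  "open U \<Longrightarrow> (\<And>q. q \<in> U \<Longrightarrow> f q = g q) \<Longrightarrow> smooth_on U f \<Longrightarrow> smooth_on U g"
  unfolding smooth_on_iff_differentiable_upto using differentiable_upto_cong_open by blast

lemma smooth_on_dR: "smooth_on U f \<Longrightarrow> smooth_on U (dR f w)"
  unfolding smooth_on_iff_differentiable_upto
  using differentiable_upto.simps(2) by blast

lemma smooth_on_const: "smooth_on U (\<lambda>_. c)"
  unfolding smooth_on_iff_differentiable_upto using differentiable_upto_const by blast

lemma smooth_on_add: "open U \<Longrightarrow> smooth_on U f \<Longrightarrow> smooth_on U g \<Longrightarrow> smooth_on U (\<lambda>q. f q + g q)"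
  unfolding smooth_on_iff_differentiable_upto using differentiable_upto_add by blast

lemma smooth_on_mult: "open U \<Longrightarrow> smooth_on U f \<Longrightarrow> smooth_on U g \<Longrightarrow> smooth_on U (\<lambda>q. f q * g q)"
  unfolding smooth_on_iff_differentiable_upto using differentiable_upto_mult by blast

lemma smooth_on_inverse:
  "open U \<Longrightarrow> smooth_on U g \<Longrightarrow> \<forall>q\<in>U. g q \<noteq> 0 \<Longrightarrow> smooth_on U (\<lambda>q. inverse (g q))"
  unfolding smooth_on_iff_differentiable_upto using differentiable_upto_inverse by blast

lemma smooth_on_differentiable_on: "smooth_on U f \<Longrightarrow> f differentiable_on U"
  unfolding smooth_on_def by (drule spec[of _ "[]"]) simp

lemma smooth_on_differentiable_at:
  "smooth_on U f \<Longrightarrow> open U \<Longrightarrow> p \<in> U \<Longrightarrow> f differentiable (at p)"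
  using smooth_on_differentiable_on differentiable_on_eq_differentiable_at by blast

lemma smooth_on_iff_dR: "smooth_on U f \<longleftrightarrow> f differentiable_on U \<and> (\<forall>w. smooth_on U (dR f w))"
  unfolding smooth_on_iff_differentiable_upto
proof (intro iffI conjI allI)
  assume all: "\<forall>n. differentiable_upto U n f"
  from all[rule_format, of 0] show "f differentiable_on U" by simp
  fix w n
  from all[rule_format, of "Suc n"] show "differentiable_upto U n (dR f w)" by simp
next
  fix n
  assume "f differentiable_on U \<and> (\<forall>w n. differentiable_upto U n (dR f w))"
  then show "differentiable_upto U n f" by (cases n) auto
qed

lemma dR_dR_commute:
  assumes U: "open U" "p \<in> U" and f: "f differentiable_on U"
    and fu: "dR f u differentiable_on U" and fw: "dR f w differentiable_on U"
  shows "dR (dR f u) w p = dR (dR f w) u p"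
proof -
  define Df where "Df q = frechet_derivative f (at q)" for q
  have df: "(f has_derivative Df q) (at q)" if "q \<in> U" for q
    unfolding Df_def using f U that frechet_derivative_works differentiable_on_eq_differentiable_at by blast
  then have eq: "dR f v q = Df q v" if "q \<in> U" for q v
    using that dR_has_derivative by blast
  have "dR f u differentiable (at p)" "dR f w differentiable (at p)"
    using fu fw U differentiable_on_eq_differentiable_at by blast+
  then obtain Hu Hw where Hu: "(dR f u has_derivative Hu) (at p)" and Hw: "(dR f w has_derivative Hw) (at p)"
    unfolding differentiable_def by blast
  have "((\<lambda>q. Df q u) has_derivative Hu) (at p)" "((\<lambda>q. Df q w) has_derivative Hw) (at p)"
    by (rule has_derivative_transform_within_open[OF Hu U], simp add: eq)
       (rule has_derivative_transform_within_open[OF Hw U], simp add: eq)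
  then have "Hu w = Hw u"
    using second_derivative_symmetric[OF U df, of u Hu w Hw] by blast
  then show ?thesis
    using dR_has_derivative[OF Hu] dR_has_derivative[OF Hw] by simp
qed

section \<open>Wirtinger derivatives\<close>

(* The common form of the four Wirtinger derivatives, so that their calculus is proved once. *)
definition wirt :: "complex \<Rightarrow> 'n::finite pt \<Rightarrow> 'n pt \<Rightarrow> ('n pt \<Rightarrow> complex) \<Rightarrow> 'n pt \<Rightarrow> complex" where
  "wirt c a b f p = (dR f a p + c * dR f b p) / 2"

lemma dS_eq_wirt: "dS i = wirt (- \<i>) (axis i 1, 0) (axis i \<i>, 0)"
  by (intro ext) (simp add: dS_def wirt_def)

lemma dSb_eq_wirt: "dSb i = wirt \<i> (axis i 1, 0) (axis i \<i>, 0)"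
  by (intro ext) (simp add: dSb_def wirt_def)

lemma dZ_eq_wirt: "dZ = wirt (- \<i>) (0, 1) (0, \<i>)"
  by (intro ext) (simp add: dZ_def wirt_def)

lemma dZb_eq_wirt: "dZb = wirt \<i> (0, 1) (0, \<i>)"
  by (intro ext) (simp add: dZb_def wirt_def)

lemma wirt_cong_open:
  "open V \<Longrightarrow> p \<in> V \<Longrightarrow> (\<And>q. q \<in> V \<Longrightarrow> f q = g q) \<Longrightarrow> wirt c a b f p = wirt c a b g p"
  unfolding wirt_def using dR_cong_open[of V p f g] by simp

lemma smooth_on_wirt:
  assumes "open U" "smooth_on U f"
  shows "smooth_on U (wirt c a b f)"
proof -
  have "smooth_on U (\<lambda>p. (\<lambda>_. 1/2) p * dR f a p + (\<lambda>_. c/2) p * dR f b p)"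
    by (intro smooth_on_add[OF assms(1)] smooth_on_mult[OF assms(1)] smooth_on_const smooth_on_dR assms(2))
  then show ?thesis
    by (rule smooth_on_cong_open[OF assms(1), rotated]) (simp add: wirt_def field_simps)
qed

lemma dR_wirt:
  assumes "dR f a differentiable (at p)" "dR f b differentiable (at p)"
  shows "dR (wirt c a b f) x p = (dR (dR f a) x p + c * dR (dR f b) x p) / 2"
proof -
  obtain Da Db where "(dR f a has_derivative Da) (at p)" "(dR f b has_derivative Db) (at p)"
    using assms unfolding differentiable_def by blast
  note d = this
  have "((\<lambda>q. (dR f a q + c * dR f b q) / 2) has_derivative (\<lambda>h. (Da h + c * Db h) / 2)) (at p)"
    using d by (auto intro!: derivative_eq_intros)
  from dR_has_derivative[OF this] show ?thesis
    using dR_has_derivative[OF d(1)] dR_has_derivative[OF d(2)] unfolding wirt_def[abs_def] by simp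
qed

lemma wirt_commute:
  assumes "open U" "p \<in> U" "smooth_on U f"
  shows "wirt c a b (wirt c' a' b' f) p = wirt c' a' b' (wirt c a b f) p"
proof -
  have d: "dR f v differentiable (at p)" for v
    using smooth_on_differentiable_at[OF smooth_on_dR[OF assms(3)] assms(1,2)] .
  have "dR (dR f u) v p = dR (dR f v) u p" for u v
    using assms by (intro dR_dR_commute smooth_on_differentiable_on smooth_on_dR)
  then show ?thesis
    unfolding wirt_def[of c a b "wirt c' a' b' f"] wirt_def[of c' a' b' "wirt c a b f"] dR_wirt[OF d d]
    by (simp add: field_simps)
qed

lemma wirt_diff:
  "f differentiable (at p) \<Longrightarrow> g differentiable (at p) \<Longrightarrow>
     wirt c a b (\<lambda>q. f q - g q) p = wirt c a b f p - wirt c a b g p"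
  unfolding wirt_def by (simp add: dR_diff field_simps)

lemma wirt_mult:
  "f differentiable (at p) \<Longrightarrow> g differentiable (at p) \<Longrightarrow>
     wirt c a b (\<lambda>q. f q * g q) p = f p * wirt c a b g p + wirt c a b f p * g p"
  unfolding wirt_def by (simp add: dR_mult field_simps)

lemma wirt_divide:
  assumes "f differentiable (at p)" "g differentiable (at p)" "g p \<noteq> 0"
  shows "wirt c a b (\<lambda>q. f q / g q) p = wirt c a b f p / g p - f p * wirt c a b g p / (g p * g p)"
proof -
  have "(\<lambda>q. inverse (g q)) differentiable (at p)"
    using assms(2,3) by (rule differentiable_inverse)
  then have "wirt c a b (\<lambda>q. f q * inverse (g q)) p
               = f p * wirt c a b (\<lambda>q. inverse (g q)) p + wirt c a b f p * inverse (g p)"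
    by (rule wirt_mult[OF assms(1)])
  also have "wirt c a b (\<lambda>q. inverse (g q)) p = - (wirt c a b g p / (g p * g p))"
    unfolding wirt_def dR_inverse[OF assms(2,3)] using assms(3) by (simp add: field_simps)
  finally show ?thesis
    using assms(3) by (simp add: field_simps flip: divide_inverse)
qed

lemma smooth_on_wirtinger:
  assumes "open U" "smooth_on U f"
  shows "smooth_on U (dS i f)" "smooth_on U (dSb i f)" "smooth_on U (dZ f)" "smooth_on U (dZb f)"
  unfolding dS_eq_wirt dSb_eq_wirt dZ_eq_wirt dZb_eq_wirt using smooth_on_wirt[OF assms] by auto

lemma cnj_dR_real_valued:
  assumes "open V" "q \<in> V" "\<forall>x\<in>V. cnj (f x) = f x" "f differentiable (at q)"
  shows "cnj (dR f u q) = dR f u q"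
proof -
  obtain D where D: "(f has_derivative D) (at q)"
    using assms(4) unfolding differentiable_def by blast
  have "((\<lambda>x. cnj (f x)) has_derivative (\<lambda>h. cnj (D h))) (at q)"
    using D by (rule has_derivative_cnj)
  then have D': "(f has_derivative (\<lambda>h. cnj (D h))) (at q)"
    by (rule has_derivative_transform_within_open[OF _ assms(1,2)]) (use assms(3) in auto)
  show ?thesis
    using dR_has_derivative[OF D, of u] dR_has_derivative[OF D', of u] by simp
qed

lemma cnj_dS_dZb:
  assumes U: "open U" "p \<in> U" and f: "smooth_on U f" "\<forall>x\<in>U. cnj (f x) = f x"
  shows "cnj (dS j (dZb f) p) = dSb j (dZ f) p"
proof -
  have d: "dR f v differentiable (at p)" for v
    using smooth_on_differentiable_at[OF smooth_on_dR[OF f(1)] U] .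
  have real1: "cnj (dR f v x) = dR f v x" if "x \<in> U" for v x
    by (rule cnj_dR_real_valued[OF U(1) that f(2) smooth_on_differentiable_at[OF f(1) U(1) that]])
  have real2: "cnj (dR (dR f v) x p) = dR (dR f v) x p" for v x
    by (rule cnj_dR_real_valued[OF U _ d]) (simp add: real1)
  show ?thesis
    unfolding dS_eq_wirt dSb_eq_wirt dZ_eq_wirt dZb_eq_wirt wirt_def[of _ _ _ "wirt _ _ _ f"] dR_wirt[OF d d]
    by (simp add: real2 field_simps)
qed

lemma has_derivative_logl:
  assumes "open U" "q \<in> U" "\<forall>p\<in>U. lam p > 0"
    and "((\<lambda>p. complex_of_real (lam p)) has_derivative DL) (at q)"
  shows "(logl lam has_derivative (\<lambda>h. DL h / complex_of_real (lam q))) (at q)"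
proof -
  have "complex_of_real (lam q) \<notin> \<real>\<^sub>\<le>\<^sub>0"
    using assms(2,3) by (auto simp: nonpos_Reals_def)
  then have "(Ln has_derivative (\<lambda>h. h / complex_of_real (lam q))) (at (complex_of_real (lam q)))"
    using has_field_derivative_Ln unfolding has_field_derivative_def by (simp add: divide_inverse_commute)
  from has_derivative_compose[OF assms(4) this]
  have "((\<lambda>p. Ln (complex_of_real (lam p))) has_derivative (\<lambda>h. DL h / complex_of_real (lam q))) (at q)" .
  then show ?thesis
    by (rule has_derivative_transform_within_open[OF _ assms(1,2)])
       (use assms(3) in \<open>simp add: logl_def Ln_of_real\<close>)
qed

lemma
  assumes "open U" "q \<in> U" "\<forall>p\<in>U. lam p > 0"
    and "(\<lambda>p. complex_of_real (lam p)) differentiable (at q)"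
  shows dR_logl: "dR (logl lam) w q = dR (\<lambda>p. complex_of_real (lam p)) w q / complex_of_real (lam q)"
    and differentiable_logl: "logl lam differentiable (at q)"
proof -
  obtain DL where DL: "((\<lambda>p. complex_of_real (lam p)) has_derivative DL) (at q)"
    using assms(4) unfolding differentiable_def by blast
  show "dR (logl lam) w q = dR (\<lambda>p. complex_of_real (lam p)) w q / complex_of_real (lam q)"
    using dR_has_derivative[OF has_derivative_logl[OF assms(1-3) DL]] dR_has_derivative[OF DL] by simp
  show "logl lam differentiable (at q)"
    using has_derivative_logl[OF assms(1-3) DL] unfolding differentiable_def by blast
qed

lemma wirt_logl:
  assumes "open U" "q \<in> U" "\<forall>p\<in>U. lam p > 0"
    and "(\<lambda>p. complex_of_real (lam p)) differentiable (at q)"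
  shows "wirt c a b (logl lam) q = wirt c a b (\<lambda>p. complex_of_real (lam p)) q / complex_of_real (lam q)"
proof -
  have "complex_of_real (lam q) \<noteq> 0"
    using assms(2,3) by auto
  then show ?thesis
    unfolding wirt_def dR_logl[OF assms] by (simp add: field_simps)
qed

lemma smooth_on_logl:
  assumes "open U" "\<forall>p\<in>U. lam p > 0" "smooth_on U (\<lambda>p. complex_of_real (lam p))"
  shows "smooth_on U (logl lam)"
proof -
  have prod: "smooth_on U (\<lambda>q. dR (\<lambda>p. complex_of_real (lam p)) w q * inverse (complex_of_real (lam q)))" for w
    using assms by (intro smooth_on_mult smooth_on_dR smooth_on_inverse) auto
  have eq: "dR (logl lam) w q = dR (\<lambda>p. complex_of_real (lam p)) w q * inverse (complex_of_real (lam q))"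
    if "q \<in> U" for w q
    using dR_logl[OF assms(1) that assms(2) smooth_on_differentiable_at[OF assms(3,1) that]]
    by (simp add: divide_inverse)
  have "smooth_on U (dR (logl lam) w)" for w
    by (rule smooth_on_cong_open[OF assms(1) _ prod[of w]]) (simp add: eq)
  moreover have "logl lam differentiable_on U"
    using differentiable_logl[OF assms(1) _ assms(2) smooth_on_differentiable_at[OF assms(3,1)]]
    by (simp add: differentiable_on_eq_differentiable_at assms(1))
  ultimately show ?thesis
    using smooth_on_iff_dR by blast
qed

section \<open>The coefficients e_ij\<close>

lemma ecoef_eq:
  assumes U: "open U" "q \<in> U" and pos: "\<forall>p\<in>U. lam p > 0"
    and sL: "smooth_on U (\<lambda>p. complex_of_real (lam p))"
  shows "ecoef lam i j q = dS i (dSb j (logl lam)) q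
           - dS i (dZb (logl lam)) q * dSb j (dZ (logl lam)) q / complex_of_real (lam q)"
proof -
  have "cnj (dS j (dZb (logl lam)) q) = dSb j (dZ (logl lam)) q"
    using cnj_dS_dZb[OF U smooth_on_logl[OF U(1) pos sL]] by (simp add: logl_def)
  moreover have "complex_of_real (lam q) \<noteq> 0"
    using pos U(2) by auto
  ultimately show ?thesis
    by (simp add: ecoef_def gcoef_def acoef_def field_simps)
qed

lemma dZ_dS_dZb_logl:
  assumes U: "open U" "p \<in> U" and pos: "\<forall>p\<in>U. lam p > 0"
    and sL: "smooth_on U (\<lambda>p. complex_of_real (lam p))"
    and curv: "\<forall>p\<in>U. dZ (dZb (logl lam)) p = complex_of_real (lam p)"
  shows "dZ (dS i (dZb (logl lam))) p = complex_of_real (lam p) * dS i (logl lam) p"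
proof -
  have "smooth_on U (dZb (logl lam))"
    using smooth_on_wirtinger(4)[OF U(1) smooth_on_logl[OF U(1) pos sL]] .
  then have "dZ (dS i (dZb (logl lam))) p = dS i (dZ (dZb (logl lam))) p"
    unfolding dZ_eq_wirt dS_eq_wirt by (rule wirt_commute[OF U])
  also have "\<dots> = dS i (\<lambda>p. complex_of_real (lam p)) p"
    unfolding dS_eq_wirt by (rule wirt_cong_open[OF U]) (simp add: curv)
  also have "\<dots> = complex_of_real (lam p) * dS i (logl lam) p"
  proof -
    have "complex_of_real (lam p) \<noteq> 0"
      using pos U(2) by auto
    then show ?thesis
      using wirt_logl[OF U pos smooth_on_differentiable_at[OF sL U]]
      unfolding dS_eq_wirt by (simp add: field_simps)
  qed
  finally show ?thesis .
qed

lemma wirt_ecoef: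
  fixes lam :: "'n::finite pt \<Rightarrow> real" and i j :: 'n
  assumes U: "open U" "p \<in> U" and pos: "\<forall>p\<in>U. lam p > 0"
    and sL: "smooth_on U (\<lambda>p. complex_of_real (lam p))"
  defines "\<phi> \<equiv> logl lam" and "L \<equiv> \<lambda>q. complex_of_real (lam q)"
    and "A \<equiv> dS i (dZb (logl lam))" and "B \<equiv> dSb j (dZ (logl lam))"
  shows "wirt c a b (ecoef lam i j) p = wirt c a b (dS i (dSb j \<phi>)) p
           - (wirt c a b A p * B p + A p * wirt c a b B p - A p * B p * wirt c a b \<phi> p) / L p"
proof -
  define P where "P = dS i (dSb j \<phi>)"
  have s\<phi>: "smooth_on U (logl lam)"
    by (rule smooth_on_logl[OF U(1) pos sL])
  have Lp: "L p \<noteq> 0"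
    using pos U(2) unfolding L_def by force
  have dP: "P differentiable (at p)" and dA: "A differentiable (at p)" and dB: "B differentiable (at p)"
    and dL: "L differentiable (at p)"
    unfolding P_def A_def B_def L_def \<phi>_def
    by (intro smooth_on_differentiable_at[OF _ U] smooth_on_wirtinger[OF U(1)] s\<phi> sL)+
  have "wirt c a b (ecoef lam i j) p = wirt c a b (\<lambda>q. P q - A q * B q / L q) p"
    using ecoef_eq[OF U(1) _ pos sL]
    by (intro wirt_cong_open[OF U]) (simp add: P_def A_def B_def \<phi>_def L_def)
  also have "\<dots> = wirt c a b P p - wirt c a b (\<lambda>q. A q * B q / L q) p"
    using dP dA dB dL Lp by (intro wirt_diff) auto
  also have "wirt c a b (\<lambda>q. A q * B q / L q) p
               = wirt c a b (\<lambda>q. A q * B q) p / L p - A p * B p * wirt c a b L p / (L p * L p)"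
    using dA dB dL Lp by (intro wirt_divide) auto
  also have "wirt c a b (\<lambda>q. A q * B q) p = A p * wirt c a b B p + wirt c a b A p * B p"
    using dA dB by (rule wirt_mult)
  also have "A p * B p * wirt c a b L p / (L p * L p) = A p * B p * wirt c a b \<phi> p / L p"
    using wirt_logl[OF U pos dL[unfolded L_def]] Lp by (simp add: \<phi>_def L_def)
  also have "wirt c a b P p - ((A p * wirt c a b B p + wirt c a b A p * B p) / L p
                                - A p * B p * wirt c a b \<phi> p / L p)
             = wirt c a b (dS i (dSb j \<phi>)) p
                 - (wirt c a b A p * B p + A p * wirt c a b B p - A p * B p * wirt c a b \<phi> p) / L p"
    by (simp add: P_def add_divide_distrib diff_divide_distrib algebra_simps)
  finally show ?thesis .
qed

lemma dS_dS_commute: "open U \<Longrightarrow> p \<in> U \<Longrightarrow> smooth_on U f \<Longrightarrow> dS k (dS i f) p = dS i (dS k f) p"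
  unfolding dS_eq_wirt by (rule wirt_commute)

lemma dZ_dS_dSb_commute:
  assumes "open U" "p \<in> U" "smooth_on U f"
  shows "dZ (dS i (dSb j f)) p = dS i (dSb j (dZ f)) p"
proof -
  have "dZ (dS i (dSb j f)) p = dS i (dZ (dSb j f)) p"
    using smooth_on_wirtinger(2)[OF assms(1,3)]
    unfolding dZ_eq_wirt dS_eq_wirt by (rule wirt_commute[OF assms(1,2)])
  also have "\<dots> = dS i (dSb j (dZ f)) p"
    unfolding dS_eq_wirt
  proof (rule wirt_cong_open[OF assms(1,2)])
    show "dZ (dSb j f) q = dSb j (dZ f) q" if "q \<in> U" for q
      unfolding dZ_eq_wirt dSb_eq_wirt by (rule wirt_commute[OF assms(1) that assms(3)])
  qed
  finally show ?thesis .
qed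

lemma vlift_ecoef:
  fixes lam :: "'n::finite pt \<Rightarrow> real" and i j k :: 'n
  assumes U: "open U" "p \<in> U" and pos: "\<forall>p\<in>U. lam p > 0"
    and sL: "smooth_on U (\<lambda>p. complex_of_real (lam p))"
    and curv: "\<forall>p\<in>U. dZ (dZb (logl lam)) p = complex_of_real (lam p)"
  defines "\<phi> \<equiv> logl lam" and "L \<equiv> \<lambda>q. complex_of_real (lam q)"
    and "A \<equiv> \<lambda>i. dS i (dZb (logl lam))" and "B \<equiv> dSb j (dZ (logl lam))"
  shows "vlift lam k (ecoef lam i j) p =
           dS k (dS i (dSb j \<phi>)) p
           - (dS k (A i) p * B p + A i p * dS k B p + A k p * dS i B p) / L p
           + (A i p * dS k \<phi> p + A k p * dS i \<phi> p) * B p / L p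
           + A i p * A k p * (dZ B p - B p * dZ \<phi> p) / (L p * L p)"
proof -
  have W: "wirt c a b (ecoef lam i j) p = wirt c a b (dS i (dSb j \<phi>)) p
             - (wirt c a b (A i) p * B p + A i p * wirt c a b B p - A i p * B p * wirt c a b \<phi> p) / L p"
    for c a b
    unfolding A_def B_def \<phi>_def L_def by (rule wirt_ecoef[OF U pos sL])
  have Sk: "dS k (ecoef lam i j) p = dS k (dS i (dSb j \<phi>)) p
          - (dS k (A i) p * B p + A i p * dS k B p - A i p * B p * dS k \<phi> p) / L p"
    using W[of "- \<i>" "(axis k 1, 0)" "(axis k \<i>, 0)"] unfolding dS_eq_wirt .
  have Zk: "dZ (ecoef lam i j) p = dZ (dS i (dSb j \<phi>)) p
          - (dZ (A i) p * B p + A i p * dZ B p - A i p * B p * dZ \<phi> p) / L p"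
    using W[of "- \<i>" "(0, 1)" "(0, \<i>)"] unfolding dZ_eq_wirt .
  have ZP: "dZ (dS i (dSb j \<phi>)) p = dS i B p"
    unfolding \<phi>_def B_def by (rule dZ_dS_dSb_commute[OF U smooth_on_logl[OF U(1) pos sL]])
  have ZA: "dZ (A i) p = L p * dS i \<phi> p"
    unfolding A_def \<phi>_def L_def by (rule dZ_dS_dZb_logl[OF U pos sL curv])
  have ak: "acoef lam k p = - A k p / L p"
    by (simp add: acoef_def A_def \<phi>_def L_def)
  have "L p \<noteq> 0"
    using pos U(2) unfolding L_def by force
  then show ?thesis
    unfolding vlift_def Sk Zk ZP ZA ak by (simp add: field_simps)
qed

theorem lemma3p2:
  fixes lam :: "'n::finite pt \<Rightarrow> real" and U :: "'n pt set" and g :: nat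
  assumes "g \<ge> 2" and "CARD('n) = 3 * g - 3"
    and "open U"
    and "\<forall>p\<in>U. lam p > 0"
    and "smooth_on U (\<lambda>p. complex_of_real (lam p))"
    and "\<forall>p\<in>U. dZ (dZb (logl lam)) p = complex_of_real (lam p)"
  shows "\<forall>i j k. \<forall>p\<in>U. vlift lam k (ecoef lam i j) p = vlift lam i (ecoef lam k j) p"
proof (intro allI ballI)
  fix i j k p assume "p \<in> U"
  have s\<phi>: "smooth_on U (logl lam)"
    using assms(3-5) by (rule smooth_on_logl)
  have "dS k (dS i (dSb j (logl lam))) p = dS i (dS k (dSb j (logl lam))) p"
    using assms(3) \<open>p \<in> U\<close> smooth_on_wirtinger(2)[OF assms(3) s\<phi>] by (rule dS_dS_commute)
  moreover have "dS k (dS i (dZb (logl lam))) p = dS i (dS k (dZb (logl lam))) p"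
    using assms(3) \<open>p \<in> U\<close> smooth_on_wirtinger(4)[OF assms(3) s\<phi>] by (rule dS_dS_commute)
  ultimately show "vlift lam k (ecoef lam i j) p = vlift lam i (ecoef lam k j) p"
    unfolding vlift_ecoef[OF assms(3) \<open>p \<in> U\<close> assms(4-6)] by (simp add: algebra_simps)
qed

end
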